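(* Let $n\ge 2$ and $1\le s\le n-1$ be integers, and let ${\bf A}=(a(i,j))_{1\le i,j\le n}$ be a real $n\times n$ matrix such that $a(i,j)\ne 0$ for every pair $(i,j)$ satisfying either $i\le j\le \min(i+n-s,n)$ or $j+s\le i$. Then the $2n\times 2n$ matrix ${\bf A}_{\rm sde}$ associated with ${\bf A}$ (defined below) has $1$ as a simple eigenvalue, and all of its other eigenvalues lie in the open unit disk $\{z\in\mathbb{C}: |z|<1\}$.
   Context: For a real number $t$, $t_+=\max(t,0)$. For a real $n\times n$ matrix ${\bf A}=(a(i,j))$ with no zero row, define the decoding weights $w_i=\big(\sum_{j=1}^n |a(i,j)|\big)^{-1}$, $1\le i\le n$, the normalized entries $\tilde a(i,j)=w_i\,a(i,j)$, the $n\times n$ matrices $\tilde{\bf A}_+=\big((\tilde a(i,j))_+\big)_{i,j}$ and $\tilde{\bf A}_-=\big((-\tilde a(i,j))_+\big)_{i,j}$, and the $2n\times 2n$ (row stochastic) block matrix $${\bf A}_{\rm sde}=\begin{pmatrix}\tilde{\bf A}_+ & \tilde{\bf A}_-\\ \tilde{\bf A}_+ & \tilde{\bf A}_-\end{pmatrix}.$$ *)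

theory Defs
  imports "Jordan_Normal_Form.Char_Poly"
begin

text \<open>Matrices are Jordan_Normal_Form matrices, indexed from 0.
  Decoding weights, normalized entries, positive/negative parts, and the
  2n x 2n block matrix A_sde.\<close>

definition dec_weight :: "real mat \<Rightarrow> nat \<Rightarrow> real" where
  "dec_weight A i = inverse (\<Sum>j<dim_col A. \<bar>A $$ (i, j)\<bar>)"

definition normalized_mat :: "real mat \<Rightarrow> real mat" where
  "normalized_mat A = mat (dim_row A) (dim_col A) (\<lambda>(i, j). dec_weight A i * A $$ (i, j))"

definition pos_part_mat :: "real mat \<Rightarrow> real mat" where
  "pos_part_mat A = mat (dim_row A) (dim_col A)
     (\<lambda>(i, j). max (normalized_mat A $$ (i, j)) 0)"

definition neg_part_mat :: "real mat \<Rightarrow> real mat" where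
  "neg_part_mat A = mat (dim_row A) (dim_col A)
     (\<lambda>(i, j). max (- normalized_mat A $$ (i, j)) 0)"

definition A_sde :: "real mat \<Rightarrow> real mat" where
  "A_sde A = four_block_mat (pos_part_mat A) (neg_part_mat A) (pos_part_mat A) (neg_part_mat A)"

end

theory Submission
  imports Defs
    "Jordan_Normal_Form.Jordan_Normal_Form_Existence"
    "Jordan_Normal_Form.Jordan_Normal_Form_Uniqueness"
begin

text \<open>
  Rows i and n + i of A_sde coincide and its two blocks add up to the row-stochastic matrix
  M = (|w_i a(i,j)|), so an eigenvector of A_sde for a nonzero eigenvalue z folds onto an
  eigenvector of M for z. The hypothesis gives M a positive diagonal, which puts every Gershgorin
  disk of M inside the unit disk, touching the unit circle only at 1. It also makes M irreducible
  through the cycle 1 \<rightarrow> 2 \<rightarrow> \<dots> \<rightarrow> n \<rightarrow> 1, so by the maximum principle the only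
  solutions of A_sde v = v + c 1 have c = 0 and v constant. Hence the kernels of A_sde - I and
  (A_sde - I)^2 are both spanned by 1, and the Jordan normal form shows that 1 is a simple
  eigenvalue.
\<close>

(* HOL-Algebra's group order would otherwise capture the root multiplicity of polynomials. *)
hide_const (open) Coset.order

lemma ex_max_index:
  fixes u :: "nat \<Rightarrow> 'a :: linorder"
  assumes "0 < n"
  obtains i where "i < n" and "\<And>j. j < n \<Longrightarrow> u j \<le> u i"
proof -
  have "Max (u ` {..<n}) \<in> u ` {..<n}"
    using assms by (intro Max_in) auto
  then obtain i where i: "i < n" "u i = Max (u ` {..<n})"
    by auto
  have "u j \<le> u i" if "j < n" for j
    unfolding i(2) using that by (intro Max_ge) auto
  with i(1) show ?thesis
    by (rule that)
qed

definition row_stochastic :: "(nat \<Rightarrow> nat \<Rightarrow> real) \<Rightarrow> nat \<Rightarrow> bool" where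
  "row_stochastic M n \<longleftrightarrow> (\<forall>i<n. \<forall>j<n. 0 \<le> M i j) \<and> (\<forall>i<n. (\<Sum>j<n. M i j) = 1)"

definition support_graph :: "(nat \<Rightarrow> nat \<Rightarrow> real) \<Rightarrow> nat \<Rightarrow> (nat \<times> nat) set" where
  "support_graph M n = {(i, j). i < n \<and> j < n \<and> M i j \<noteq> 0}"

definition strongly_connected_support :: "(nat \<Rightarrow> nat \<Rightarrow> real) \<Rightarrow> nat \<Rightarrow> bool" where
  "strongly_connected_support M n \<longleftrightarrow> (\<forall>i<n. \<forall>j<n. (i, j) \<in> (support_graph M n)\<^sup>*)"

lemma row_stochastic_mean_le:
  assumes "row_stochastic M n" "i < n" "\<And>j. j < n \<Longrightarrow> u j \<le> m"
  shows "(\<Sum>j<n. M i j * u j) \<le> m"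
proof -
  have "(\<Sum>j<n. M i j * u j) \<le> (\<Sum>j<n. M i j * m)"
    using assms by (intro sum_mono mult_left_mono) (auto simp: row_stochastic_def)
  also have "\<dots> = m"
    using assms by (simp add: row_stochastic_def sum_distrib_right[symmetric])
  finally show ?thesis .
qed

lemma row_stochastic_shift_eq_0:
  assumes "row_stochastic M n" "0 < n"
    and "\<And>i. i < n \<Longrightarrow> (\<Sum>j<n. M i j * u j) = u i + c"
  shows "c = 0"
proof -
  have nonpos: "d \<le> 0" if "\<And>i. i < n \<Longrightarrow> (\<Sum>j<n. M i j * v j) = v i + d" for v d
  proof -
    obtain i where i: "i < n" "\<And>j. j < n \<Longrightarrow> v j \<le> v i"
      using ex_max_index[OF \<open>0 < n\<close>] by blast
    have "v i + d \<le> v i"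
      using row_stochastic_mean_le[OF assms(1) i(1), of v "v i"] i(2) that[OF i(1)] by simp
    then show ?thesis by simp
  qed
  have "c \<le> 0"
    using nonpos[of u c] assms(3) by blast
  moreover have "- c \<le> 0"
    using nonpos[of "\<lambda>j. - u j" "- c"] assms(3) by (simp add: sum_negf)
  ultimately show ?thesis by simp
qed

lemma harmonic_max_spreads_along_edge:
  assumes "row_stochastic M n" "i < n" "\<And>j. j < n \<Longrightarrow> u j \<le> u i"
    and "(\<Sum>j<n. M i j * u j) = u i" and "(i, k) \<in> support_graph M n"
  shows "u k = u i"
proof -
  have "(\<Sum>j<n. M i j * (u i - u j)) = (\<Sum>j<n. M i j) * u i - (\<Sum>j<n. M i j * u j)"
    by (simp add: right_diff_distrib sum_subtractf sum_distrib_right)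
  also have "\<dots> = 0"
    using assms by (simp add: row_stochastic_def)
  moreover have "0 \<le> M i j * (u i - u j)" if "j < n" for j
    using assms(1-3) that by (simp add: row_stochastic_def)
  ultimately have "\<forall>j\<in>{..<n}. M i j * (u i - u j) = 0"
    using sum_nonneg_eq_0_iff[of "{..<n}" "\<lambda>j. M i j * (u i - u j)"] by simp
  then show ?thesis
    using assms(5) by (auto simp: support_graph_def)
qed

lemma harmonic_max_spreads:
  assumes "row_stochastic M n" "\<And>i. i < n \<Longrightarrow> (\<Sum>j<n. M i j * u j) = u i"
    and "i < n" "\<And>j. j < n \<Longrightarrow> u j \<le> u i" and "(i, k) \<in> (support_graph M n)\<^sup>*"
  shows "u k = u i"
  using assms(5)
proof (induction rule: rtrancl_induct)
  case (step j k)
  then have "j < n"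
    by (simp add: support_graph_def)
  have "u k = u j"
  proof (rule harmonic_max_spreads_along_edge[OF assms(1) \<open>j < n\<close>])
    show "u l \<le> u j" if "l < n" for l
      using assms(4)[OF that] step.IH by simp
    show "(\<Sum>l<n. M j l * u l) = u j"
      by (rule assms(2)[OF \<open>j < n\<close>])
    show "(j, k) \<in> support_graph M n"
      by (rule step.hyps(2))
  qed
  with step.IH show ?case
    by simp
qed simp

lemma harmonic_const_if_strongly_connected:
  assumes "row_stochastic M n" "strongly_connected_support M n"
    and "\<And>i. i < n \<Longrightarrow> (\<Sum>j<n. M i j * u j) = u i"
    and "i < n" "j < n"
  shows "u i = u j"
proof -
  obtain k where k: "k < n" "\<And>j. j < n \<Longrightarrow> u j \<le> u k"
    using ex_max_index[of n u] assms(4) by auto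
  have spread: "u l = u k" if "l < n" for l
  proof (rule harmonic_max_spreads[OF assms(1,3) k(1)])
    show "u j \<le> u k" if "j < n" for j
      using k(2) that .
    show "(k, l) \<in> (support_graph M n)\<^sup>*"
      using assms(2) k(1) that by (simp add: strongly_connected_support_def)
  qed
  show ?thesis
    using spread[OF assms(4)] spread[OF assms(5)] by simp
qed

lemma row_stochastic_affine_fixed_point:
  fixes w :: "nat \<Rightarrow> complex"
  assumes "row_stochastic M n" "strongly_connected_support M n" "0 < n"
    and fixed: "\<And>i. i < n \<Longrightarrow> (\<Sum>j<n. of_real (M i j) * w j) = w i + c"
  shows "c = 0" and "\<And>i j. i < n \<Longrightarrow> j < n \<Longrightarrow> w i = w j"
proof -
  have Re: "(\<Sum>j<n. M i j * Re (w j)) = Re (w i) + Re c" if "i < n" for i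
    using arg_cong[OF fixed[OF that], of Re] by (simp add: Re_sum)
  have Im: "(\<Sum>j<n. M i j * Im (w j)) = Im (w i) + Im c" if "i < n" for i
    using arg_cong[OF fixed[OF that], of Im] by (simp add: Im_sum)
  have "Re c = 0"
    using row_stochastic_shift_eq_0[OF assms(1,3), of "\<lambda>j. Re (w j)" "Re c"] Re by blast
  moreover have "Im c = 0"
    using row_stochastic_shift_eq_0[OF assms(1,3), of "\<lambda>j. Im (w j)" "Im c"] Im by blast
  ultimately show "c = 0"
    by (simp add: complex_eq_iff)
  show "w i = w j" if "i < n" "j < n" for i j
  proof (rule complex_eqI)
    show "Re (w i) = Re (w j)"
      using harmonic_const_if_strongly_connected[OF assms(1,2) _ that, of "\<lambda>j. Re (w j)"]
        Re \<open>Re c = 0\<close> by simp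
    show "Im (w i) = Im (w j)"
      using harmonic_const_if_strongly_connected[OF assms(1,2) _ that, of "\<lambda>j. Im (w j)"]
        Im \<open>Im c = 0\<close> by simp
  qed
qed

lemma tangent_disk_inside_unit_disk:
  fixes z :: complex
  assumes "0 < d" "d \<le> 1" "cmod (z - of_real d) \<le> 1 - d"
  shows "z = 1 \<or> cmod z < 1"
proof (rule ccontr)
  assume "\<not> ?thesis"
  then have "z \<noteq> 1" and "1 \<le> cmod z" by auto
  let ?x = "Re z" and ?y = "Im z"
  have "cmod (z - of_real d) ^ 2 \<le> (1 - d) ^ 2"
    using assms by (intro power_mono) auto
  then have disk: "(?x - d)\<^sup>2 + ?y\<^sup>2 \<le> (1 - d)\<^sup>2"
    by (simp add: cmod_power2)
  have outside: "1 \<le> ?x\<^sup>2 + ?y\<^sup>2"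
    using \<open>1 \<le> cmod z\<close> by (metis cmod_power2 one_le_power)
  have "(?x - d)\<^sup>2 + ?y\<^sup>2 = ?x\<^sup>2 + ?y\<^sup>2 - 2 * d * ?x + d\<^sup>2"
    by (simp add: power2_eq_square algebra_simps)
  then have "2 * d * 1 \<le> 2 * d * ?x"
    using disk outside by (simp add: power2_eq_square algebra_simps)
  then have "1 \<le> ?x"
    using assms(1) by simp
  then have "(1 - d)\<^sup>2 \<le> (?x - d)\<^sup>2"
    using assms by (intro power_mono) auto
  then have "?y\<^sup>2 = 0" and "(?x - d)\<^sup>2 = (1 - d)\<^sup>2"
    using disk zero_le_power2[of ?y] by linarith+
  then have "?y = 0" and "?x = 1"
    using \<open>1 \<le> ?x\<close> assms(2) by (auto simp: power2_eq_iff)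
  with \<open>z \<noteq> 1\<close> show False by (simp add: complex_eq_iff)
qed

lemma row_stochastic_eigenvalue_in_unit_disk:
  fixes w :: "nat \<Rightarrow> complex"
  assumes st: "row_stochastic M n" and diag: "\<And>i. i < n \<Longrightarrow> 0 < M i i"
    and eigen: "\<And>i. i < n \<Longrightarrow> (\<Sum>j<n. of_real (M i j) * w j) = z * w i"
    and "k < n" "w k \<noteq> 0"
  shows "z = 1 \<or> cmod z < 1"
proof -
  obtain i where i: "i < n" "\<And>j. j < n \<Longrightarrow> cmod (w j) \<le> cmod (w i)"
    using ex_max_index[of n "\<lambda>j. cmod (w j)"] \<open>k < n\<close> by auto
  define m where "m = cmod (w i)"
  define d where "d = M i i"
  let ?R = "{..<n} - {i}"
  have "0 < m"
    using i(2)[OF \<open>k < n\<close>] \<open>w k \<noteq> 0\<close> unfolding m_def by (meson less_le_trans zero_less_norm_iff)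
  have row: "(\<Sum>j<n. f j) = f i + (\<Sum>j\<in>?R. f j)" for f :: "nat \<Rightarrow> 'a :: comm_monoid_add"
    using i(1) by (simp add: sum.remove[of "{..<n}" i])
  have off_diag: "(\<Sum>j\<in>?R. M i j) = 1 - d"
    using row[of "M i"] st i(1) by (simp add: row_stochastic_def d_def)
  have "0 < d" "d \<le> 1"
    using diag[OF i(1)] off_diag sum_nonneg[of ?R "M i"] st i(1)
    by (auto simp: d_def row_stochastic_def)
  have "(z - of_real d) * w i = (\<Sum>j\<in>?R. of_real (M i j) * w j)"
    using row[of "\<lambda>j. of_real (M i j) * w j"] eigen[OF i(1)] by (simp add: d_def algebra_simps)
  then have "cmod (z - of_real d) * m = cmod (\<Sum>j\<in>?R. of_real (M i j) * w j)"
    unfolding m_def by (metis norm_mult)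
  also have "\<dots> \<le> (\<Sum>j\<in>?R. cmod (of_real (M i j) * w j))"
    by (rule norm_sum)
  also have "\<dots> \<le> (\<Sum>j\<in>?R. M i j * m)"
    using st i by (intro sum_mono) (auto simp: norm_mult m_def row_stochastic_def intro: mult_left_mono)
  also have "\<dots> = (1 - d) * m"
    by (simp add: sum_distrib_right[symmetric] off_diag)
  finally have "cmod (z - of_real d) \<le> 1 - d"
    using \<open>0 < m\<close> by simp
  then show ?thesis
    using tangent_disk_inside_unit_disk \<open>0 < d\<close> \<open>d \<le> 1\<close> by blast
qed

lemma rtrancl_of_cycle:
  assumes "\<And>i. Suc i < n \<Longrightarrow> (i, Suc i) \<in> R" and "(n - 1, 0) \<in> R"
    and "i < n" "j < n"
  shows "(i, j) \<in> R\<^sup>*"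
proof -
  have forward: "(i, j) \<in> R\<^sup>*" if "i \<le> j" "j < n" for i j
    using that
  proof (induction j)
    case (Suc j)
    show ?case
    proof (cases "i = Suc j")
      case False
      then have "(i, j) \<in> R\<^sup>*"
        using Suc by simp
      moreover have "(j, Suc j) \<in> R"
        using assms(1) Suc.prems(2) .
      ultimately show ?thesis
        by (rule rtrancl_into_rtrancl)
    qed simp
  qed simp
  show ?thesis
  proof (cases "i \<le> j")
    case True
    then show ?thesis
      using forward assms(4) by simp
  next
    case False
    have "(i, n - 1) \<in> R\<^sup>*"
      using forward[of i "n - 1"] assms(3) by simp
    then have "(i, 0) \<in> R\<^sup>*"
      using assms(2) by (rule rtrancl_into_rtrancl)
    moreover have "(0, j) \<in> R\<^sup>*"
      using forward assms(4) by simp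
    ultimately show ?thesis
      by (rule rtrancl_trans)
  qed
qed

lemma order_char_poly_eq_dim_eigenspace:
  fixes A :: "complex mat"
  assumes "A \<in> carrier_mat n n"
    and "dim_gen_eigenspace A e 2 = dim_gen_eigenspace A e 1"
  shows "order e (char_poly A) = dim_gen_eigenspace A e 1"
proof -
  obtain as where "char_poly A = (\<Prod>a\<leftarrow>as. [:- a, 1:])"
    using char_poly_factorized[OF assms(1)] by auto
  then obtain n_as where jnf: "jordan_nf A n_as"
    using jordan_nf_exists[OF assms(1)] by blast
  define L where "L = map fst (filter (\<lambda>(m, e'). e' = e) n_as)"
  have dim: "dim_gen_eigenspace A e k = sum_list (map (min k) L)" for k
    unfolding dim_gen_eigenspace[OF jnf] L_def ..
  have eigen_blocks: "(\<lambda>me. snd me = e) = (\<lambda>(m, e'). e' = e)"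
    by auto
  have "order e (char_poly A) = sum_list L"
    unfolding jordan_nf_order[OF jnf] L_def eigen_blocks ..
  \<comment> \<open>min 1 m = min 2 m for every Jordan block size m, so all blocks for e have size one\<close>
  have "sum_list (map (min 2) L) = sum_list (map (min 1) L) + sum_list (map (\<lambda>m. min 2 m - min 1 m) L)"
    unfolding sum_list_addf[symmetric] by (rule arg_cong[where f = sum_list], rule map_cong) auto
  then have "\<forall>m\<in>set L. min 2 m - min 1 m = (0 :: nat)"
    using assms(2) unfolding dim by (simp add: sum_list_eq_0_iff)
  then have "map (min 1) L = L"
    by (intro map_idI) (auto simp: min_def split: if_splits)
  with \<open>order e (char_poly A) = sum_list L\<close> show ?thesis
    using dim[of 1] by simp
qed

lemma char_matrix_mult_vec:
  assumes "(A :: 'a :: field mat) \<in> carrier_mat n n" and "v \<in> carrier_vec n"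
  shows "char_matrix A e *\<^sub>v v = A *\<^sub>v v + (- e) \<cdot>\<^sub>v v"
  unfolding char_matrix_def
  by (rule eq_vecI) (use assms in \<open>auto simp: add_scalar_prod_distrib[of _ n]\<close>)

definition abs_normalized :: "real mat \<Rightarrow> nat \<Rightarrow> nat \<Rightarrow> real" where
  "abs_normalized A i j = \<bar>dec_weight A i * A $$ (i, j)\<bar>"

lemma pos_part_plus_neg_part_mat:
  assumes "i < dim_row A" "j < dim_col A"
  shows "pos_part_mat A $$ (i, j) + neg_part_mat A $$ (i, j) = abs_normalized A i j"
  using assms
  by (auto simp: pos_part_mat_def neg_part_mat_def normalized_mat_def abs_normalized_def max_def)

lemma dec_weight_pos:
  assumes "k < dim_col A" "A $$ (i, k) \<noteq> 0"
  shows "0 < dec_weight A i"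
proof -
  have "\<bar>A $$ (i, k)\<bar> \<le> (\<Sum>j<dim_col A. \<bar>A $$ (i, j)\<bar>)"
    using assms by (intro member_le_sum) auto
  then show ?thesis
    using assms(2) by (simp add: dec_weight_def)
qed

lemma sum_abs_normalized:
  assumes "k < dim_col A" "A $$ (i, k) \<noteq> 0"
  shows "(\<Sum>j<dim_col A. abs_normalized A i j) = 1"
proof -
  have "(\<Sum>j<dim_col A. abs_normalized A i j) = dec_weight A i * (\<Sum>j<dim_col A. \<bar>A $$ (i, j)\<bar>)"
    using dec_weight_pos[OF assms] by (simp add: abs_normalized_def abs_mult sum_distrib_left)
  then show ?thesis
    using dec_weight_pos[OF assms] by (simp add: dec_weight_def)
qed

lemma row_stochastic_abs_normalized:
  assumes "A \<in> carrier_mat n n" and "\<And>i. i < n \<Longrightarrow> \<exists>k<n. A $$ (i, k) \<noteq> 0"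
  shows "row_stochastic (abs_normalized A) n"
  using assms sum_abs_normalized[of _ A]
  by (auto simp: row_stochastic_def abs_normalized_def)

lemma support_graph_abs_normalized:
  assumes "A \<in> carrier_mat n n" and "\<And>i. i < n \<Longrightarrow> \<exists>k<n. A $$ (i, k) \<noteq> 0"
  shows "support_graph (abs_normalized A) n = support_graph (\<lambda>i j. A $$ (i, j)) n"
  using assms dec_weight_pos[of _ A]
  by (fastforce simp: support_graph_def abs_normalized_def)

lemma A_sde_carrier:
  "A \<in> carrier_mat n n \<Longrightarrow> A_sde A \<in> carrier_mat (2 * n) (2 * n)"
  unfolding A_sde_def pos_part_mat_def neg_part_mat_def by auto

lemma A_sde_index:
  assumes "A \<in> carrier_mat n n" "i < 2 * n" "j < 2 * n"
  shows "A_sde A $$ (i, j) =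
    (if j < n then pos_part_mat A $$ (i mod n, j) else neg_part_mat A $$ (i mod n, j - n))"
  using assms unfolding A_sde_def pos_part_mat_def neg_part_mat_def
  by (auto simp: index_mat_four_block less_diff_conv2 mod_if)

lemma A_sde_mult_vec:
  assumes A: "A \<in> carrier_mat n n" and v: "v \<in> carrier_vec (2 * n)" and i: "i < 2 * n"
  shows "(map_mat complex_of_real (A_sde A) *\<^sub>v v) $ i =
    (\<Sum>j<n. of_real (pos_part_mat A $$ (i mod n, j)) * v $ j) +
    (\<Sum>j<n. of_real (neg_part_mat A $$ (i mod n, j)) * v $ (j + n))"
proof -
  let ?f = "\<lambda>j. of_real (A_sde A $$ (i, j)) * v $ j"
  have "(map_mat complex_of_real (A_sde A) *\<^sub>v v) $ i = (\<Sum>j\<in>{0..<2 * n}. ?f j)"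
    using A_sde_carrier[OF A] v i by (simp add: scalar_prod_def)
  also have "\<dots> = (\<Sum>j\<in>{0..<n}. ?f j) + (\<Sum>j\<in>{0 + n..<n + n}. ?f j)"
    by (simp add: sum.atLeastLessThan_concat mult_2)
  also have "(\<Sum>j\<in>{0 + n..<n + n}. ?f j) = (\<Sum>j\<in>{0..<n}. ?f (j + n))"
    by (rule sum.shift_bounds_nat_ivl)
  also have "(\<Sum>j\<in>{0..<n}. ?f j) = (\<Sum>j<n. of_real (pos_part_mat A $$ (i mod n, j)) * v $ j)"
    using A i by (auto simp: A_sde_index lessThan_atLeast0 intro!: sum.cong)
  also have "(\<Sum>j\<in>{0..<n}. ?f (j + n)) =
      (\<Sum>j<n. of_real (neg_part_mat A $$ (i mod n, j)) * v $ (j + n))"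
    using A i by (auto simp: A_sde_index lessThan_atLeast0 intro!: sum.cong)
  finally show ?thesis .
qed

lemma A_sde_mult_ones:
  assumes A: "A \<in> carrier_mat n n" and rows: "\<And>i. i < n \<Longrightarrow> \<exists>k<n. A $$ (i, k) \<noteq> 0"
  shows "map_mat complex_of_real (A_sde A) *\<^sub>v vec (2 * n) (\<lambda>_. 1) = vec (2 * n) (\<lambda>_. 1)"
    (is "?C *\<^sub>v ?ones = ?ones")
proof (rule eq_vecI)
  fix i assume "i < dim_vec ?ones"
  then have i: "i < 2 * n" by simp
  then have "i mod n < n" by simp
  have "(?C *\<^sub>v ?ones) $ i =
    of_real (\<Sum>j<n. pos_part_mat A $$ (i mod n, j) + neg_part_mat A $$ (i mod n, j))"
    using A_sde_mult_vec[OF A _ i, of ?ones] by (simp add: sum.distrib)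
  also have "\<dots> = of_real (\<Sum>j<n. abs_normalized A (i mod n) j)"
    using carrier_matD[OF A] \<open>i mod n < n\<close> by (simp add: pos_part_plus_neg_part_mat)
  also have "\<dots> = 1"
  proof -
    obtain k where "k < n" "A $$ (i mod n, k) \<noteq> 0"
      using rows[OF \<open>i mod n < n\<close>] by blast
    then have "(\<Sum>j<n. abs_normalized A (i mod n) j) = 1"
      using sum_abs_normalized[of k A] carrier_matD[OF A] by simp
    then show ?thesis
      by simp
  qed
  finally show "(?C *\<^sub>v ?ones) $ i = ?ones $ i"
    using i by simp
qed (use A_sde_carrier[OF A] in simp)

lemma A_sde_affine_eigen:
  assumes A: "A \<in> carrier_mat n n" and v: "v \<in> carrier_vec (2 * n)" and "z \<noteq> 0"
    and eq: "\<And>i. i < 2 * n \<Longrightarrow> (map_mat complex_of_real (A_sde A) *\<^sub>v v) $ i = z * v $ i + c"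
  shows "\<And>i. i < n \<Longrightarrow> v $ (i + n) = v $ i"
    and "\<And>i. i < n \<Longrightarrow> (\<Sum>j<n. of_real (abs_normalized A i j) * v $ j) = z * v $ i + c"
proof -
  let ?C = "map_mat complex_of_real (A_sde A)"
  have same_rows: "(?C *\<^sub>v v) $ (i + n) = (?C *\<^sub>v v) $ i" if "i < n" for i
    using A_sde_mult_vec[OF A v, of i] A_sde_mult_vec[OF A v, of "i + n"] that by simp
  show upper: "v $ (i + n) = v $ i" if "i < n" for i
  proof -
    have "z * v $ (i + n) + c = z * v $ i + c"
      using same_rows[OF that] eq[of i] eq[of "i + n"] that by simp
    then show ?thesis
      using \<open>z \<noteq> 0\<close> by simp
  qed
  show "(\<Sum>j<n. of_real (abs_normalized A i j) * v $ j) = z * v $ i + c" if "i < n" for i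
  proof -
    have "z * v $ i + c = (?C *\<^sub>v v) $ i"
      using eq[of i] that by simp
    also have "\<dots> = (\<Sum>j<n. of_real (pos_part_mat A $$ (i, j)) * v $ j
                          + of_real (neg_part_mat A $$ (i, j)) * v $ j)"
      using A_sde_mult_vec[OF A v, of i] that by (simp add: upper sum.distrib)
    also have "\<dots> = (\<Sum>j<n. of_real (abs_normalized A i j) * v $ j)"
      using carrier_matD[OF A] that
      by (intro sum.cong) (auto simp: pos_part_plus_neg_part_mat[symmetric] distrib_right)
    finally show ?thesis by simp
  qed
qed

locale irreducible_sde =
  fixes A :: "real mat" and n :: nat
  assumes A_carrier: "A \<in> carrier_mat n n"
    and n_pos: "0 < n"
    and diag_nonzero: "\<And>i. i < n \<Longrightarrow> A $$ (i, i) \<noteq> 0"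
    and connected: "strongly_connected_support (\<lambda>i j. A $$ (i, j)) n"
begin

abbreviation C :: "complex mat" where
  "C \<equiv> map_mat complex_of_real (A_sde A)"

abbreviation ones :: "complex vec" where
  "ones \<equiv> vec (2 * n) (\<lambda>_. 1)"

lemma rows_nonzero: "i < n \<Longrightarrow> \<exists>k<n. A $$ (i, k) \<noteq> 0"
  using diag_nonzero by blast

lemma C_carrier: "C \<in> carrier_mat (2 * n) (2 * n)"
  using A_sde_carrier[OF A_carrier] by simp

lemma M_stochastic: "row_stochastic (abs_normalized A) n"
  by (rule row_stochastic_abs_normalized[OF A_carrier rows_nonzero])

lemma M_connected: "strongly_connected_support (abs_normalized A) n"
  using connected support_graph_abs_normalized[OF A_carrier rows_nonzero]
  by (simp add: strongly_connected_support_def)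

lemma M_diag_pos: "i < n \<Longrightarrow> 0 < abs_normalized A i i"
  using dec_weight_pos[of i A i] A_carrier diag_nonzero by (simp add: abs_normalized_def)

lemma eigenvalue_cases:
  assumes "eigenvalue C z"
  shows "z = 1 \<or> cmod z < 1"
proof (cases "z = 0")
  case False
  from assms obtain v where v: "v \<in> carrier_vec (2 * n)" "v \<noteq> 0\<^sub>v (2 * n)" "C *\<^sub>v v = z \<cdot>\<^sub>v v"
    unfolding eigenvalue_def eigenvector_def using C_carrier by auto
  have eq: "(C *\<^sub>v v) $ i = z * v $ i + 0" if "i < 2 * n" for i
    using v that by simp
  have upper: "v $ (i + n) = v $ i" if "i < n" for i
    using eq that by (rule A_sde_affine_eigen(1)[OF A_carrier v(1) False])
  have lower: "(\<Sum>j<n. of_real (abs_normalized A i j) * v $ j) = z * v $ i" if "i < n" for i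
    using A_sde_affine_eigen(2)[OF A_carrier v(1) False] eq that by simp
  obtain k where k: "k < 2 * n" "v $ k \<noteq> 0"
    using v(1,2) by (auto simp: vec_eq_iff)
  obtain k' where "k' < n" "v $ k' \<noteq> 0"
  proof (cases "k < n")
    case False
    then have "k - n < n" and "v $ (k - n) = v $ k"
      using k(1) upper[of "k - n"] by auto
    then show ?thesis
      using that[of "k - n"] k(2) by simp
  qed (use k that in blast)
  with M_diag_pos lower show ?thesis
    by (rule row_stochastic_eigenvalue_in_unit_disk[OF M_stochastic])
qed simp

lemma affine_fixed_point:
  assumes v: "v \<in> carrier_vec (2 * n)" and eq: "\<And>i. i < 2 * n \<Longrightarrow> (C *\<^sub>v v) $ i = v $ i + c"
  shows "c = 0" and "v = v $ 0 \<cdot>\<^sub>v ones"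
proof -
  have eq1: "(C *\<^sub>v v) $ i = 1 * v $ i + c" if "i < 2 * n" for i
    using eq[OF that] by simp
  have upper: "v $ (i + n) = v $ i" if "i < n" for i
    using eq1 that by (rule A_sde_affine_eigen(1)[OF A_carrier v one_neq_zero])
  have lower: "(\<Sum>j<n. of_real (abs_normalized A i j) * v $ j) = v $ i + c" if "i < n" for i
    using A_sde_affine_eigen(2)[OF A_carrier v one_neq_zero] eq1 that by simp
  then show "c = 0"
    by (rule row_stochastic_affine_fixed_point(1)[OF M_stochastic M_connected n_pos])
  have const: "v $ i = v $ j" if "i < n" "j < n" for i j
    using lower that by (rule row_stochastic_affine_fixed_point(2)[OF M_stochastic M_connected n_pos])
  have const_all: "v $ i = v $ 0" if "i < 2 * n" for i
  proof (cases "i < n")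
    case False
    then have "v $ i = v $ (i - n)"
      using upper[of "i - n"] that by simp
    also have "\<dots> = v $ 0"
      using const[of "i - n" 0] False that n_pos by simp
    finally show ?thesis .
  qed (use const[of i 0] that n_pos in simp)
  show "v = v $ 0 \<cdot>\<^sub>v ones"
  proof (rule eq_vecI)
    fix i
    assume "i < dim_vec (v $ 0 \<cdot>\<^sub>v ones)"
    then show "v $ i = (v $ 0 \<cdot>\<^sub>v ones) $ i"
      using const_all[of i] by simp
  qed (use v in simp)
qed

abbreviation X :: "complex mat" where
  "X \<equiv> char_matrix C 1"

lemma X_carrier: "X \<in> carrier_mat (2 * n) (2 * n)"
  using C_carrier by simp

lemma mat_kernel_X_iff: "v \<in> mat_kernel X \<longleftrightarrow> v \<in> carrier_vec (2 * n) \<and> C *\<^sub>v v = v"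
proof -
  have "X *\<^sub>v v = 0\<^sub>v (2 * n) \<longleftrightarrow> C *\<^sub>v v = v" if "v \<in> carrier_vec (2 * n)"
    using that C_carrier by (auto simp: char_matrix_mult_vec[OF C_carrier that] vec_eq_iff)
  then show ?thesis
    using mat_kernel[OF X_carrier] by blast
qed

lemma mat_kernel_X: "mat_kernel X = {a \<cdot>\<^sub>v ones | a. True}"
proof
  show "mat_kernel X \<subseteq> {a \<cdot>\<^sub>v ones | a. True}"
  proof
    fix v
    assume "v \<in> mat_kernel X"
    then have "v = v $ 0 \<cdot>\<^sub>v ones"
      using affine_fixed_point(2)[of v 0] by (simp add: mat_kernel_X_iff)
    then show "v \<in> {a \<cdot>\<^sub>v ones | a. True}"
      by blast
  qed
  show "{a \<cdot>\<^sub>v ones | a. True} \<subseteq> mat_kernel X"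
    using A_sde_mult_ones[OF A_carrier rows_nonzero] C_carrier
    by (auto simp: mat_kernel_X_iff mult_mat_vec)
qed

lemma mat_kernel_X_squared: "mat_kernel (X ^\<^sub>m 2) = mat_kernel X"
proof -
  have XX: "X ^\<^sub>m 2 = X * X" and XX_carrier: "X * X \<in> carrier_mat (2 * n) (2 * n)"
    using X_carrier by (auto simp: numeral_2_eq_2)
  have "v \<in> mat_kernel X" if "v \<in> mat_kernel (X * X)" for v
  proof -
    have v: "v \<in> carrier_vec (2 * n)" and "X *\<^sub>v (X *\<^sub>v v) = 0\<^sub>v (2 * n)"
      using mat_kernelD[OF XX_carrier that] X_carrier by (auto simp: assoc_mult_mat_vec)
    then have "X *\<^sub>v v \<in> mat_kernel X"
      using X_carrier by (intro mat_kernelI) auto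
    then obtain a where a: "X *\<^sub>v v = a \<cdot>\<^sub>v ones"
      by (auto simp: mat_kernel_X)
    have "(C *\<^sub>v v) $ i = v $ i + a" if "i < 2 * n" for i
      using arg_cong[OF a, of "\<lambda>w. w $ i"] that v C_carrier
      by (simp add: char_matrix_mult_vec[OF C_carrier v] algebra_simps)
    then have "a = 0"
      by (rule affine_fixed_point(1)[OF v])
    then show "v \<in> mat_kernel X"
      using a v X_carrier by (intro mat_kernelI) auto
  qed
  moreover have "v \<in> mat_kernel (X * X)" if "v \<in> mat_kernel X" for v
    using mat_kernelD[OF X_carrier that] X_carrier
    by (intro mat_kernelI[OF XX_carrier]) (auto simp: assoc_mult_mat_vec)
  ultimately show ?thesis
    unfolding XX by blast
qed

lemma kernel_dim_X_le_1: "kernel_dim X \<le> 1"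
proof -
  interpret K: kernel "2 * n" "2 * n" X
    by unfold_locales (rule X_carrier)
  have ones_in: "{ones} \<subseteq> mat_kernel X"
    by (auto simp: mat_kernel_X intro: exI[of _ 1])
  have "mat_kernel X \<subseteq> K.span {ones}"
    using K.Ker.in_own_span[OF ones_in] submodule.smult_closed[OF K.Ker.span_is_submodule[OF ones_in]]
    by (auto simp: mat_kernel_X)
  then have "K.span {ones} = mat_kernel X"
    using K.Ker.span_is_subset2[OF ones_in] by auto
  then have "K.dim \<le> card {ones}"
    by (intro K.Ker.gen_ge_dim) (use ones_in in auto)
  then show ?thesis by simp
qed

lemma eigenvalue_1: "eigenvalue C 1"
  unfolding eigenvalue_def eigenvector_def
  using A_sde_mult_ones[OF A_carrier rows_nonzero] C_carrier n_pos
  by (auto intro!: exI[of _ ones] exI[of _ "0 :: nat"] simp: vec_eq_iff)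

lemma order_1: "order 1 (char_poly C) = 1"
proof -
  have "dim_gen_eigenspace C 1 2 = dim_gen_eigenspace C 1 1"
    unfolding dim_gen_eigenspace_def kernel_dim_def mat_kernel_X_squared
    using X_carrier by simp
  then have "order 1 (char_poly C) = kernel_dim X"
    using order_char_poly_eq_dim_eigenspace[OF C_carrier] by (simp add: dim_gen_eigenspace_def)
  moreover have "order 1 (char_poly C) \<noteq> 0"
  proof -
    have "poly (char_poly C) 1 = 0"
      using eigenvalue_1 eigenvalue_root_char_poly[OF C_carrier] by simp
    moreover have "char_poly C \<noteq> 0"
      using degree_monic_char_poly[OF C_carrier] by auto
    ultimately show ?thesis
      using order_root by blast
  qed
  ultimately show ?thesis
    using kernel_dim_X_le_1 by linarith
qed

end

theorem proposition1:
  fixes n s :: nat and A :: "real mat"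
  assumes "n \<ge> 2" and "1 \<le> s" and "s \<le> n - 1"
    and "A \<in> carrier_mat n n"
    and "\<And>i j. i < n \<Longrightarrow> j < n \<Longrightarrow>
           ((i + 1 \<le> j + 1 \<and> j + 1 \<le> min (i + 1 + n - s) n) \<or> j + 1 + s \<le> i + 1) \<Longrightarrow>
           A $$ (i, j) \<noteq> 0"
  shows "eigenvalue (map_mat complex_of_real (A_sde A)) 1
    \<and> order 1 (char_poly (map_mat complex_of_real (A_sde A))) = 1
    \<and> (\<forall>z. eigenvalue (map_mat complex_of_real (A_sde A)) z \<longrightarrow> z \<noteq> 1 \<longrightarrow> cmod z < 1)"
proof -
  interpret irreducible_sde A n
  proof
    show "A \<in> carrier_mat n n" by fact
    show "0 < n" using assms(1) by simp
    show "A $$ (i, i) \<noteq> 0" if "i < n" for i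
      using assms(5)[of i i] that assms(1-3) by auto
    \<comment> \<open>the nonzero entries include the cycle 0 \<rightarrow> 1 \<rightarrow> \<dots> \<rightarrow> n - 1 \<rightarrow> 0\<close>
    show "strongly_connected_support (\<lambda>i j. A $$ (i, j)) n"
      unfolding strongly_connected_support_def
      using assms(5)[of "n - 1" 0] assms(5)[of _ "Suc _"] assms(1-3)
      by (intro allI impI rtrancl_of_cycle) (auto simp: support_graph_def)
  qed
  show ?thesis
    using eigenvalue_1 order_1 eigenvalue_cases by blast
qed

end
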